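(* Let $\alpha>-1$, $b>1$ and $\beta=\frac{2\cos^{-1}(1/b)}{\pi}\in(0,1)$. There exist a holomorphic map $\phi:\mathbb{D}\to\mathbb{D}$ with $\phi(\mathbb{D})\subset\Gamma(1,b)$ and a constant $C>0$ (depending only on $\alpha$, $\phi$ and $b$) such that $$v_\alpha\big(\phi^{-1}(S(1,h))\big)\ge C\,h^{(2+\alpha)/\beta}$$ for all sufficiently small $h>0$.
   Context: $\mathbb{D}$ is the open unit disc of $\mathbb{C}$. $\Gamma(1,b)=\{z\in\mathbb{D}:|1-z|<\frac b2(1-|z|^2)\}$ is the nontangential approach region at $1$. For $0<h<1$, $S(1,h)=\{z\in\mathbb{D}:|1-z|<h\}$. For $\alpha>-1$, $dv_\alpha(z)=c_\alpha(1-|z|^2)^\alpha\,dA(z)$ is the weighted area measure on $\mathbb{D}$ normalized to be a probability measure. *)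

theory Defs
  imports "HOL-Analysis.Analysis"
begin

definition Gamma_region :: "complex \<Rightarrow> real \<Rightarrow> complex set" where
  "Gamma_region \<zeta> b = {z \<in> ball 0 1. cmod (\<zeta> - z) < b / 2 * (1 - (cmod z)\<^sup>2)}"

definition S_region :: "complex \<Rightarrow> real \<Rightarrow> complex set" where
  "S_region \<zeta> h = {z \<in> ball 0 1. cmod (\<zeta> - z) < h}"

text \<open>Normalizing constant c_alpha: the integral of (1-|z|^2)^alpha over the disc is pi/(alpha+1).\<close>
definition c_alpha :: "real \<Rightarrow> real" where
  "c_alpha \<alpha> = (\<alpha> + 1) / pi"

definition v_alpha :: "real \<Rightarrow> complex measure" where
  "v_alpha \<alpha> = density lborel
     (\<lambda>z. ennreal (indicator (ball (0::complex) 1) z * c_alpha \<alpha> * (1 - (cmod z)\<^sup>2) powr \<alpha>))"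

definition beta_of :: "real \<Rightarrow> real" where
  "beta_of b = 2 * arccos (1 / b) / pi"

end

theory Submission
  imports Defs
begin

(*
  Put beta = beta_of b, so that beta * pi/2 = arccos (1/b), and
    phi z = 1 - e * V z / (1 + V z),   V z = (1 - z) powr beta,   e = (b - 1) / b.
  Since |arg (1 - z)| < pi/2, the value V z lies in the closed sector
  |arg v| <= arccos (1/b), i.e. b * Re v >= |v|.  An elementary estimate shows
  that w = e v / (1 + v) then satisfies |w| <= |v| and |w| < b/2 (1 - |1 - w|^2),
  so phi maps the disc into Gamma(1,b) and |1 - phi z| <= |1 - z| powr beta.
  Hence the preimage of S(1,h) contains the disc B_t = ball (1 - t) (t/2) for
  t = 2/3 (h/2) powr (1/beta).  On B_t the weight (1 - |z|^2) is comparable to t,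
  so v_alpha (B_t) >= const * t^(2+alpha) = const * h powr ((2+alpha)/beta).
  Finally, to pass from emeasure to measure we show that v_alpha is a finite
  measure, by summing the weight over the dyadic annuli 1 - 2^-k <= |z| < 1 - 2^-(k+1).
*)

section \<open>The weighted area measure\<close>

definition disc_weight :: "real \<Rightarrow> complex \<Rightarrow> real" where
  "disc_weight \<alpha> z = indicator (ball 0 1) z * c_alpha \<alpha> * (1 - (cmod z)\<^sup>2) powr \<alpha>"

lemma v_alpha_eq_density: "v_alpha \<alpha> = density lborel (\<lambda>z. ennreal (disc_weight \<alpha> z))"
  unfolding v_alpha_def disc_weight_def ..

lemma c_alpha_pos: "\<alpha> > -1 \<Longrightarrow> c_alpha \<alpha> > 0"
  unfolding c_alpha_def by simp

lemma disc_weight_measurable: "(\<lambda>z. ennreal (disc_weight \<alpha> z)) \<in> borel_measurable lborel"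
  unfolding disc_weight_def
  by (intro measurable_compose[OF _ measurable_ennreal]
      borel_measurable_times borel_measurable_indicator powr_real_measurable
      borel_measurable_const borel_measurable_diff borel_measurable_power borel_measurable_norm
      measurable_ident_sets) auto

lemma emeasure_v_alpha:
  assumes "A \<in> sets lborel"
  shows "emeasure (v_alpha \<alpha>) A = (\<integral>\<^sup>+z. ennreal (disc_weight \<alpha> z) * indicator A z \<partial>lborel)"
  unfolding v_alpha_eq_density
  by (rule emeasure_density) (use assms disc_weight_measurable in auto)

text \<open>For nonnegative exponents the weight is bounded by \<open>c_alpha\<close> on the disc.\<close>
lemma disc_weight_integral_finite_nonneg:
  assumes "\<alpha> \<ge> 0"
  shows "(\<integral>\<^sup>+z. ennreal (disc_weight \<alpha> z) \<partial>lborel) < \<infinity>"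
proof -
  have "(\<integral>\<^sup>+z. ennreal (disc_weight \<alpha> z) \<partial>lborel)
      \<le> (\<integral>\<^sup>+z. ennreal (c_alpha \<alpha>) * indicator (ball (0::complex) 1) z \<partial>lborel)"
  proof (intro nn_integral_mono)
    fix z :: complex
    show "ennreal (disc_weight \<alpha> z) \<le> ennreal (c_alpha \<alpha>) * indicator (ball 0 1) z"
    proof (cases "z \<in> ball 0 1")
      case True
      hence "0 \<le> 1 - (cmod z)\<^sup>2" "1 - (cmod z)\<^sup>2 \<le> 1" by (auto simp: abs_square_le_1)
      hence "(1 - (cmod z)\<^sup>2) powr \<alpha> \<le> 1"
        using assms powr_mono2[of \<alpha> "1 - (cmod z)\<^sup>2" 1] by simp
      hence "c_alpha \<alpha> * (1 - (cmod z)\<^sup>2) powr \<alpha> \<le> c_alpha \<alpha>"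
        using assms c_alpha_pos[of \<alpha>] by (simp add: mult_left_le)
      thus ?thesis using True by (simp add: disc_weight_def ennreal_leI)
    qed (simp add: disc_weight_def)
  qed
  also have "\<dots> = ennreal (c_alpha \<alpha>) * emeasure lborel (ball (0::complex) 1)"
    by (simp add: nn_integral_cmult_indicator)
  also have "\<dots> < \<infinity>" by (simp add: emeasure_ball ennreal_mult_less_top)
  finally show ?thesis .
qed

definition dyadic_annulus :: "nat \<Rightarrow> complex set" where
  "dyadic_annulus k = ball 0 (1 - (1/2)^(Suc k)) - ball 0 (1 - (1/2)^k)"

lemma dyadic_index_exists:
  fixes r :: real assumes "0 \<le> r" "r < 1"
  shows "\<exists>k. 1 - (1/2)^k \<le> r \<and> r < 1 - (1/2)^(Suc k)"
proof -
  obtain n where n: "(1/2::real)^n < 1 - r"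
    using real_arch_pow_inv[of "1 - r" "1/2"] assms by auto
  have "(1/2::real)^(Suc n) \<le> (1/2)^n" by (simp add: power_decreasing)
  hence ex: "\<exists>m. r < 1 - (1/2::real)^(Suc m)" using n by (intro exI[of _ n]) linarith
  define k where "k = (LEAST m. r < 1 - (1/2::real)^(Suc m))"
  have upper: "r < 1 - (1/2::real)^(Suc k)" unfolding k_def by (rule LeastI_ex[OF ex])
  have lower: "1 - (1/2::real)^k \<le> r"
  proof (cases k)
    case (Suc m)
    hence "\<not> r < 1 - (1/2::real)^(Suc m)"
      using not_less_Least[of m "\<lambda>m. r < 1 - (1/2::real)^(Suc m)"] k_def by auto
    thus ?thesis using Suc by simp
  qed (use assms in simp)
  show ?thesis using upper lower by blast
qed

lemma in_dyadic_annulus: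
  assumes "z \<in> ball 0 1"
  obtains k where "z \<in> dyadic_annulus k" "(1/2::real)^(Suc k) \<le> 1 - (cmod z)\<^sup>2"
proof -
  have z: "cmod z < 1" using assms by simp
  obtain k where k: "1 - (1/2)^k \<le> cmod z" "cmod z < 1 - (1/2)^(Suc k)"
    using dyadic_index_exists[of "cmod z"] z by auto
  have "(1/2::real)^(Suc k) \<le> 1 - cmod z" using k by simp
  also have "\<dots> \<le> 1 - (cmod z)\<^sup>2"
    using z by (simp add: power2_eq_square mult_le_cancel_right1 mult_left_le)
  finally show ?thesis using that[of k] k unfolding dyadic_annulus_def by auto
qed

lemma emeasure_dyadic_annulus: "emeasure lborel (dyadic_annulus k) \<le> ennreal (pi * (1/2)^k)"
proof -
  define r1 :: real where "r1 = 1 - (1/2)^k"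
  define r2 :: real where "r2 = 1 - (1/2)^(Suc k)"
  have r: "0 \<le> r1" "r1 \<le> r2" "r2 \<le> 1" unfolding r1_def r2_def by (auto simp: power_le_one)
  have "emeasure lborel (dyadic_annulus k)
      = emeasure lborel (ball (0::complex) r2) - emeasure lborel (ball (0::complex) r1)"
    unfolding dyadic_annulus_def r1_def[symmetric] r2_def[symmetric]
    by (rule emeasure_Diff) (use r in \<open>auto simp: emeasure_ball\<close>)
  also have "\<dots> = ennreal (pi * r2^2 - pi * r1^2)"
    using r by (simp add: emeasure_ball eval_unit_ball_vol ennreal_minus)
  also have "\<dots> \<le> ennreal (pi * (1/2)^k)"
  proof (rule ennreal_leI)
    have "r2^2 - r1^2 = (r2 - r1) * (r2 + r1)" by (simp add: power2_eq_square algebra_simps)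
    also have "\<dots> \<le> (r2 - r1) * 2" using r by (intro mult_left_mono) auto
    also have "\<dots> = (1/2)^k" unfolding r1_def r2_def by simp
    finally show "pi * r2^2 - pi * r1^2 \<le> pi * (1/2)^k"
      by (simp add: right_diff_distrib[symmetric])
  qed
  finally show ?thesis .
qed

text \<open>For \<open>-1 < alpha < 0\<close> the weight on the \<open>k\<close>-th annulus is at most a constant times
  \<open>(2^-alpha)^k\<close>; against the areas \<open>2^-k\<close> this gives a convergent geometric series.\<close>
lemma disc_weight_integral_finite_neg:
  assumes a: "\<alpha> > -1" "\<alpha> < 0"
  shows "(\<integral>\<^sup>+z. ennreal (disc_weight \<alpha> z) \<partial>lborel) < \<infinity>"
proof -
  define c where "c = c_alpha \<alpha>"
  have c: "c > 0" using a c_alpha_pos unfolding c_def by simp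
  define M :: "nat \<Rightarrow> real" where "M k = c * ((1/2) powr \<alpha>)^(Suc k)" for k
  define q :: real where "q = (1/2) powr \<alpha> / 2"
  have meas: "dyadic_annulus k \<in> sets lborel" for k unfolding dyadic_annulus_def by simp
  have pointwise: "ennreal (disc_weight \<alpha> z) \<le> (\<Sum>k. ennreal (M k) * indicator (dyadic_annulus k) z)"
    for z
  proof (cases "z \<in> ball 0 1")
    case True
    then obtain k where k: "z \<in> dyadic_annulus k" "(1/2::real)^(Suc k) \<le> 1 - (cmod z)\<^sup>2"
      by (rule in_dyadic_annulus)
    have "(1 - (cmod z)\<^sup>2) powr \<alpha> \<le> ((1/2::real)^(Suc k)) powr \<alpha>"
      by (rule powr_mono2') (use a k in auto)
    also have "\<dots> = ((1/2::real) powr (real (Suc k))) powr \<alpha>"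
      by (subst powr_realpow) auto
    also have "\<dots> = (1/2) powr (real (Suc k) * \<alpha>)" by (simp add: powr_powr)
    also have "\<dots> = ((1/2) powr \<alpha>)^(Suc k)" by (subst powr_power) auto
    finally have "disc_weight \<alpha> z \<le> M k"
      using True c unfolding M_def disc_weight_def c_def by (simp add: mult_left_mono)
    hence "ennreal (disc_weight \<alpha> z) \<le> ennreal (M k) * indicator (dyadic_annulus k) z"
      using k by (simp add: ennreal_leI)
    also have "\<dots> \<le> (\<Sum>k. ennreal (M k) * indicator (dyadic_annulus k) z)"
      by (rule sum_le_suminf[of _ "{k}", simplified]) auto
    finally show ?thesis .
  qed (simp add: disc_weight_def)
  have "(\<integral>\<^sup>+z. ennreal (disc_weight \<alpha> z) \<partial>lborel)
      \<le> (\<integral>\<^sup>+z. (\<Sum>k. ennreal (M k) * indicator (dyadic_annulus k) z) \<partial>lborel)"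
    by (intro nn_integral_mono pointwise)
  also have "\<dots> = (\<Sum>k. ennreal (M k) * emeasure lborel (dyadic_annulus k))"
    using meas by (simp add: nn_integral_suminf nn_integral_cmult_indicator)
  also have "\<dots> \<le> (\<Sum>k. ennreal (c * pi * (1/2) powr \<alpha> * q ^ k))"
  proof (intro suminf_le summableI)
    fix k
    have "ennreal (M k) * emeasure lborel (dyadic_annulus k) \<le> ennreal (M k) * ennreal (pi * (1/2)^k)"
      by (rule mult_left_mono[OF emeasure_dyadic_annulus]) simp
    also have "\<dots> = ennreal (M k * (pi * (1/2)^k))"
      using c unfolding M_def by (intro ennreal_mult[symmetric]) auto
    also have "M k * (pi * (1/2)^k) = c * pi * (1/2) powr \<alpha> * q ^ k"
      unfolding M_def q_def by (simp add: power_divide power_Suc)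
    finally show "ennreal (M k) * emeasure lborel (dyadic_annulus k)
        \<le> ennreal (c * pi * (1/2) powr \<alpha> * q ^ k)" .
  qed
  also have "\<dots> < \<infinity>"
  proof -
    have "(1/2::real) powr \<alpha> = 2 powr (-\<alpha>)" by (simp add: powr_minus_divide powr_divide)
    moreover have "(2::real) powr (-\<alpha>) < 2 powr 1" using a by (intro powr_less_mono) auto
    ultimately have q: "0 \<le> q" "q < 1" unfolding q_def by auto
    hence "summable (\<lambda>k. c * pi * (1/2) powr \<alpha> * q ^ k)"
      by (intro summable_mult summable_geometric) simp
    thus ?thesis using q c by (simp add: ennreal_suminf_neq_top top.not_eq_extremum)
  qed
  finally show ?thesis .
qed

lemma finite_measure_v_alpha:
  assumes "\<alpha> > -1"
  shows "finite_measure (v_alpha \<alpha>)"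
proof
  have "space (v_alpha \<alpha>) = UNIV" by (simp add: v_alpha_eq_density)
  hence "emeasure (v_alpha \<alpha>) (space (v_alpha \<alpha>)) = (\<integral>\<^sup>+z. ennreal (disc_weight \<alpha> z) \<partial>lborel)"
    using emeasure_v_alpha[of UNIV \<alpha>] by simp
  also have "\<dots> < \<infinity>"
    using assms disc_weight_integral_finite_nonneg disc_weight_integral_finite_neg
    by (cases "\<alpha> \<ge> 0") auto
  finally show "emeasure (v_alpha \<alpha>) (space (v_alpha \<alpha>)) \<noteq> \<infinity>" by simp
qed

lemma small_disc_near_1:
  fixes t :: real and z :: complex
  assumes t: "0 < t" "t < 1" and z: "z \<in> ball (1 - complex_of_real t) (t/2)"
  shows "cmod z < 1" "cmod (1 - z) \<le> 3/2 * t"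
    and "t/2 \<le> 1 - (cmod z)\<^sup>2" "1 - (cmod z)\<^sup>2 \<le> 3 * t"
proof -
  have d: "cmod (z - (1 - complex_of_real t)) < t/2"
    using z by (simp add: dist_norm norm_minus_commute)
  have n1: "cmod (1 - complex_of_real t) = 1 - t"
    using t by (metis abs_of_pos diff_gt_0_iff_gt norm_of_real of_real_1 of_real_diff)
  have upper: "cmod z < 1 - t/2"
    using norm_triangle_sub[of z "1 - complex_of_real t"] d n1 by linarith
  have lower: "cmod z > 1 - 3*t/2"
    using norm_triangle_sub[of "1 - complex_of_real t" z] d n1 by (simp add: norm_minus_commute)
  show "cmod z < 1" using upper t by simp
  have "cmod (1 - z) \<le> cmod (complex_of_real t) + cmod (z - (1 - complex_of_real t))"
    using norm_triangle_ineq[of "complex_of_real t" "-(z - (1 - complex_of_real t))"]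
    by (simp add: algebra_simps norm_minus_commute)
  thus "cmod (1 - z) \<le> 3/2 * t" using d t by simp
  have factor: "1 - (cmod z)\<^sup>2 = (1 - cmod z) * (1 + cmod z)"
    by (simp add: power2_eq_square algebra_simps)
  have "t/2 * 1 \<le> (1 - cmod z) * (1 + cmod z)" using upper t by (intro mult_mono) auto
  thus "t/2 \<le> 1 - (cmod z)\<^sup>2" using factor by simp
  have "(1 - cmod z) * (1 + cmod z) \<le> (3*t/2) * 2" using upper lower t by (intro mult_mono) auto
  thus "1 - (cmod z)\<^sup>2 \<le> 3 * t" using factor by simp
qed

lemma powr_comparable_lower:
  fixes t x \<alpha> :: real
  assumes "0 < t" "t/2 \<le> x" "x \<le> 3 * t"
  shows "min ((1/2) powr \<alpha>) (3 powr \<alpha>) * t powr \<alpha> \<le> x powr \<alpha>"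
proof (cases "\<alpha> \<ge> 0")
  case True
  have "min ((1/2) powr \<alpha>) (3 powr \<alpha>) * t powr \<alpha> \<le> (1/2) powr \<alpha> * t powr \<alpha>"
    by (intro mult_right_mono) auto
  also have "\<dots> = (t/2) powr \<alpha>" using assms by (simp add: powr_mult[symmetric])
  also have "\<dots> \<le> x powr \<alpha>" using True assms by (intro powr_mono2) auto
  finally show ?thesis .
next
  case False
  have "min ((1/2) powr \<alpha>) (3 powr \<alpha>) * t powr \<alpha> \<le> 3 powr \<alpha> * t powr \<alpha>"
    by (intro mult_right_mono) auto
  also have "\<dots> = (3 * t) powr \<alpha>" using assms by (simp add: powr_mult)
  also have "\<dots> \<le> x powr \<alpha>" using False assms by (intro powr_mono2') auto
  finally show ?thesis .
qed

text \<open>Hence \<open>v_alpha (ball (1 - t) (t/2))\<close> is bounded below by a constant times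
  \<open>t^(2+alpha)\<close>: the weight is \<open>\<ge> const * t^alpha\<close> and the area is \<open>pi t^2/4\<close>.\<close>
lemma v_alpha_small_disc_lower:
  fixes \<alpha> t :: real
  assumes a: "\<alpha> > -1" and t: "0 < t" "t < 1"
  shows "ennreal (c_alpha \<alpha> * min ((1/2) powr \<alpha>) (3 powr \<alpha>) * t powr \<alpha> * (pi * (t/2)^2))
     \<le> emeasure (v_alpha \<alpha>) (ball (1 - complex_of_real t) (t/2))"
proof -
  define K where "K = c_alpha \<alpha> * min ((1/2) powr \<alpha>) (3 powr \<alpha>) * t powr \<alpha>"
  define B where "B = ball (1 - complex_of_real t) (t/2)"
  have K0: "K \<ge> 0" unfolding K_def using c_alpha_pos[OF a] by simp
  have pointwise: "ennreal K * indicator B z \<le> ennreal (disc_weight \<alpha> z) * indicator B z" for z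
  proof (cases "z \<in> B")
    case True
    note near = small_disc_near_1[OF t True[unfolded B_def]]
    have "K \<le> c_alpha \<alpha> * (1 - (cmod z)\<^sup>2) powr \<alpha>"
      unfolding K_def using powr_comparable_lower[OF t(1) near(3,4)] c_alpha_pos[OF a]
      by (simp add: mult.assoc mult_left_mono)
    thus ?thesis using True near(1) by (simp add: disc_weight_def ennreal_leI)
  qed simp
  have "ennreal (K * (pi * (t/2)^2)) = (\<integral>\<^sup>+z. ennreal K * indicator B z \<partial>lborel)"
    using K0 t by (simp add: nn_integral_cmult_indicator B_def emeasure_ball eval_unit_ball_vol
        ennreal_mult)
  also have "\<dots> \<le> (\<integral>\<^sup>+z. ennreal (disc_weight \<alpha> z) * indicator B z \<partial>lborel)"
    by (intro nn_integral_mono pointwise)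
  also have "\<dots> = emeasure (v_alpha \<alpha>) B"
    unfolding B_def by (rule emeasure_v_alpha[symmetric]) simp
  finally show ?thesis unfolding K_def B_def by (simp add: mult.assoc)
qed

lemma measure_v_alpha_ge_small_disc:
  assumes a: "\<alpha> > -1" and t: "0 < t" "t < 1"
    and A: "A \<in> sets lborel" "ball (1 - complex_of_real t) (t/2) \<subseteq> A"
  shows "c_alpha \<alpha> * min ((1/2) powr \<alpha>) (3 powr \<alpha>) * t powr \<alpha> * (pi * (t/2)^2)
     \<le> measure (v_alpha \<alpha>) A"
proof -
  interpret finite_measure "v_alpha \<alpha>" by (rule finite_measure_v_alpha[OF a])
  have A_meas: "A \<in> sets (v_alpha \<alpha>)" using A(1) by (simp add: v_alpha_eq_density)
  have "ennreal (c_alpha \<alpha> * min ((1/2) powr \<alpha>) (3 powr \<alpha>) * t powr \<alpha> * (pi * (t/2)^2))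
      \<le> emeasure (v_alpha \<alpha>) (ball (1 - complex_of_real t) (t/2))"
    by (rule v_alpha_small_disc_lower[OF a t])
  also have "\<dots> \<le> emeasure (v_alpha \<alpha>) A" using A A_meas by (intro emeasure_mono) auto
  finally show ?thesis by (simp add: emeasure_eq_measure ennreal_le_iff)
qed

section \<open>A holomorphic self-map of the disc into the approach region\<close>

definition sector_power :: "real \<Rightarrow> complex \<Rightarrow> complex" where
  "sector_power \<beta> z = exp (complex_of_real \<beta> * Ln (1 - z))"

definition approach_map :: "real \<Rightarrow> real \<Rightarrow> complex \<Rightarrow> complex" where
  "approach_map b \<beta> z =
     1 - complex_of_real ((b - 1) / b) * sector_power \<beta> z / (1 + sector_power \<beta> z)"

text \<open>On the disc, \<open>1 - z\<close> lies in the right half plane, where \<open>Ln\<close> is holomorphic.\<close>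
lemma Re_one_minus_pos: "cmod z < 1 \<Longrightarrow> Re (1 - z) > 0"
  using complex_Re_le_cmod[of z] by simp

lemma norm_sector_power:
  assumes "cmod z < 1"
  shows "cmod (sector_power \<beta> z) = cmod (1 - z) powr \<beta>"
proof -
  have "1 - z \<noteq> 0" using Re_one_minus_pos[OF assms] by auto
  thus ?thesis unfolding sector_power_def by (simp add: Re_Ln powr_def)
qed

text \<open>\<open>(1 - z) powr beta\<close> lies in the sector \<open>|arg v| \<le> beta pi/2\<close>; for
  \<open>beta \<le> beta_of b\<close> this sector is contained in the cone \<open>b Re v \<ge> |v|\<close>.\<close>
lemma sector_power_in_cone:
  assumes b: "b > 1" and \<beta>: "0 \<le> \<beta>" "\<beta> \<le> beta_of b" and z: "cmod z < 1"
  shows "cmod (sector_power \<beta> z) \<le> b * Re (sector_power \<beta> z)"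
proof -
  define \<theta> where "\<theta> = \<beta> * Im (Ln (1 - z))"
  have b_inv: "0 < 1/b" "1/b < 1" using b by auto
  have arccos_bounds: "0 < arccos (1/b)" "arccos (1/b) \<le> pi/2"
    using arccos_lt_bounded[of "1/b"] arccos_le_pi2[of "1/b"] b_inv by auto
  have arg: "\<bar>Im (Ln (1 - z))\<bar> < pi/2" using Re_Ln_pos_lt_imp Re_one_minus_pos[OF z] by blast
  have "\<bar>\<theta>\<bar> = \<beta> * \<bar>Im (Ln (1 - z))\<bar>" unfolding \<theta>_def using \<beta> by (simp add: abs_mult)
  also have "\<dots> \<le> \<beta> * (pi/2)" using arg \<beta> by (intro mult_left_mono) auto
  also have "\<dots> \<le> arccos (1/b)" using \<beta> unfolding beta_of_def by (simp add: field_simps)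
  finally have "cos (arccos (1/b)) \<le> cos \<bar>\<theta>\<bar>"
    by (intro cos_monotone_0_pi_le) (use arccos_bounds in auto)
  hence cos_ge: "1/b \<le> cos \<theta>" using b_inv by (simp add: cos_arccos)
  have "Re (sector_power \<beta> z) = cmod (sector_power \<beta> z) * cos \<theta>"
    unfolding sector_power_def \<theta>_def by (simp add: Re_exp)
  hence "cmod (sector_power \<beta> z) * (1/b) \<le> Re (sector_power \<beta> z)"
    using cos_ge by (metis mult_left_mono norm_ge_zero)
  thus ?thesis using b by (simp add: field_simps)
qed

text \<open>Membership of \<open>1 - w\<close> in \<open>Gamma(1,b)\<close> rewritten in terms of \<open>w\<close>, using
  \<open>1 - |1 - w|^2 = 2 Re w - |w|^2\<close>.\<close>
lemma Gamma_region_criterion: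
  assumes b: "b > 0" and w: "cmod w < b * Re w - b / 2 * (cmod w)\<^sup>2"
  shows "1 - w \<in> Gamma_region 1 b"
proof -
  have id: "1 - (cmod (1 - w))\<^sup>2 = 2 * Re w - (cmod w)\<^sup>2"
    by (simp only: cmod_power2) (simp add: power2_eq_square algebra_simps)
  have "b / 2 * (cmod w)\<^sup>2 < b * Re w" using w norm_ge_zero[of w] by linarith
  hence "(cmod w)\<^sup>2 < 2 * Re w" using b by (simp add: field_simps)
  hence "(cmod (1 - w))\<^sup>2 < 1" using id by simp
  hence "cmod (1 - w) < 1" by (simp add: power_less_one_iff abs_le_iff)
  moreover have "cmod (1 - (1 - w)) < b / 2 * (1 - (cmod (1 - w))\<^sup>2)"
    using w unfolding id by (simp add: algebra_simps)
  ultimately show ?thesis unfolding Gamma_region_def by simp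
qed

lemma cone_to_Gamma_region:
  fixes b :: real and v :: complex
  assumes b: "b > 1" and cone: "cmod v \<le> b * Re v" and v0: "v \<noteq> 0"
  defines "w \<equiv> complex_of_real ((b - 1) / b) * v / (1 + v)"
  shows "cmod w \<le> cmod v" "1 - w \<in> Gamma_region 1 b"
proof -
  define e where "e = (b - 1) / b"
  have e: "0 < e" "e < 1" using b by (auto simp: e_def field_simps)
  define x where "x = Re v"
  define p where "p = cmod v"
  define q where "q = cmod (1 + v)"
  have p0: "p > 0" using v0 unfolding p_def by simp
  have xp: "p \<le> b * x" using cone by (simp add: x_def p_def)
  have x0: "x > 0" using xp p0 b zero_less_mult_pos[of b x] by linarith
  have q1: "q \<ge> 1 + x" unfolding q_def x_def using complex_Re_le_cmod[of "1+v"] by simp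
  have qp: "q \<le> 1 + p" unfolding q_def p_def using norm_triangle_ineq[of 1 v] by simp
  have q0: "q > 0" using q1 x0 by simp
  have nw: "cmod w = e * p / q"
    unfolding w_def e_def[symmetric] p_def q_def using e by (simp add: norm_divide norm_mult)
  have rw: "Re w = e * (x + p\<^sup>2) / q\<^sup>2"
  proof -
    have "Re w = (e * Re v * (1 + Re v) + e * Im v * Im v) / ((1 + Re v)\<^sup>2 + (Im v)\<^sup>2)"
      unfolding w_def e_def[symmetric] by (simp add: Re_divide power2_eq_square algebra_simps)
    also have "(1 + Re v)\<^sup>2 + (Im v)\<^sup>2 = q\<^sup>2" unfolding q_def by (simp add: cmod_power2)
    also have "e * Re v * (1 + Re v) + e * Im v * Im v = e * (x + p\<^sup>2)"
      using cmod_power2[of v] unfolding x_def p_def by (simp add: power2_eq_square algebra_simps)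
    finally show ?thesis .
  qed
  have "e * p / q \<le> p / 1"
    using e q1 x0 p0 by (intro frac_le) (auto intro: mult_left_le_one_le)
  thus "cmod w \<le> cmod v" using nw p_def by simp
  have key: "p * q < b * (x + p\<^sup>2) - b / 2 * e * p\<^sup>2"
  proof -
    have "p * q \<le> p * (1 + p)" using qp p0 by (simp add: mult_left_mono)
    also have "\<dots> \<le> b * x + p\<^sup>2" using xp by (simp add: power2_eq_square algebra_simps)
    also have "\<dots> < b * (x + p\<^sup>2) - b / 2 * e * p\<^sup>2"
    proof -
      have "b - b / 2 * e - 1 > 0" using b unfolding e_def by (simp add: field_simps)
      hence "(b - b / 2 * e - 1) * p\<^sup>2 > 0" using p0 by simp
      thus ?thesis by (simp add: algebra_simps)
    qed
    finally show ?thesis .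
  qed
  have main: "cmod w < b * Re w - b / 2 * (cmod w)\<^sup>2"
  proof -
    have "e * (p * q) / q\<^sup>2 < e * (b * (x + p\<^sup>2) - b / 2 * e * p\<^sup>2) / q\<^sup>2"
      using key e q0 by (simp add: divide_strict_right_mono)
    moreover have "cmod w = e * (p * q) / q\<^sup>2" using nw q0 by (simp add: power2_eq_square)
    moreover have "b * Re w - b / 2 * (cmod w)\<^sup>2 = e * (b * (x + p\<^sup>2) - b / 2 * e * p\<^sup>2) / q\<^sup>2"
      unfolding rw nw using q0 by (simp add: power2_eq_square field_simps)
    ultimately show ?thesis by simp
  qed
  show "1 - w \<in> Gamma_region 1 b" using Gamma_region_criterion[OF _ main] b by simp
qed

lemma approach_map_props:
  assumes b: "b > 1" and \<beta>: "0 \<le> \<beta>" "\<beta> \<le> beta_of b" and z: "cmod z < 1"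
  shows "approach_map b \<beta> z \<in> Gamma_region 1 b"
    and "cmod (1 - approach_map b \<beta> z) \<le> cmod (1 - z) powr \<beta>"
proof -
  have v0: "sector_power \<beta> z \<noteq> 0" unfolding sector_power_def by simp
  note Gamma = cone_to_Gamma_region[OF b sector_power_in_cone[OF b \<beta> z] v0]
  show "approach_map b \<beta> z \<in> Gamma_region 1 b"
    using Gamma(2) unfolding approach_map_def .
  show "cmod (1 - approach_map b \<beta> z) \<le> cmod (1 - z) powr \<beta>"
    using Gamma(1) norm_sector_power[OF z] unfolding approach_map_def by simp
qed

text \<open>\<open>phi\<close> is holomorphic: \<open>Ln (1 - z)\<close> is, and \<open>1 + v\<close> has positive real part.\<close>
lemma approach_map_holomorphic:
  assumes b: "b > 1" and \<beta>: "0 \<le> \<beta>" "\<beta> \<le> beta_of b"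
  shows "approach_map b \<beta> holomorphic_on ball 0 1"
proof -
  have "sector_power \<beta> holomorphic_on ball 0 1" unfolding sector_power_def
  proof (intro holomorphic_intros)
    fix z :: complex assume "z \<in> ball 0 1"
    thus "1 - z \<notin> \<real>\<^sub>\<le>\<^sub>0" using Re_one_minus_pos[of z] by (auto simp: complex_nonpos_Reals_iff)
  qed
  moreover have "1 + sector_power \<beta> z \<noteq> 0" if "z \<in> ball 0 1" for z
  proof -
    have z: "cmod z < 1" using that by simp
    have "0 < cmod (sector_power \<beta> z)" unfolding sector_power_def by simp
    also have "\<dots> \<le> b * Re (sector_power \<beta> z)" by (rule sector_power_in_cone[OF b \<beta> z])
    finally have "Re (1 + sector_power \<beta> z) > 0" using b by (simp add: zero_less_mult_iff)
    thus ?thesis by (metis zero_complex.sel(1) less_irrefl)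
  qed
  ultimately show ?thesis unfolding approach_map_def by (intro holomorphic_intros) auto
qed

lemma open_preimage_S_region:
  assumes "continuous_on (ball 0 1) \<phi>"
  shows "open {z \<in> ball 0 1. \<phi> z \<in> S_region \<zeta> h}"
proof -
  have "S_region \<zeta> h = ball 0 1 \<inter> ball \<zeta> h" unfolding S_region_def by (auto simp: dist_norm)
  hence "open (ball 0 1 \<inter> \<phi> -` S_region \<zeta> h)"
    by (intro continuous_open_preimage[OF assms]) (simp_all add: open_Int)
  moreover have "{z \<in> ball 0 1. \<phi> z \<in> S_region \<zeta> h} = ball 0 1 \<inter> \<phi> -` S_region \<zeta> h" by auto
  ultimately show ?thesis by simp
qed

text \<open>Since \<open>|1 - phi z| \<le> |1 - z| powr beta\<close>, the preimage of \<open>S(1,h)\<close> contains the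
  small disc \<open>ball (1 - t) (t/2)\<close> as soon as \<open>(3t/2) powr beta < h\<close>.\<close>
lemma small_disc_in_preimage:
  assumes b: "b > 1" and \<beta>: "0 < \<beta>" "\<beta> \<le> beta_of b"
    and t: "0 < t" "t < 1" and th: "(3/2 * t) powr \<beta> < h"
  shows "ball (1 - complex_of_real t) (t/2) \<subseteq> {z \<in> ball 0 1. approach_map b \<beta> z \<in> S_region 1 h}"
proof
  fix z assume z_in: "z \<in> ball (1 - complex_of_real t) (t/2)"
  note near = small_disc_near_1[OF t z_in]
  have "cmod (1 - approach_map b \<beta> z) \<le> cmod (1 - z) powr \<beta>"
    using approach_map_props(2)[OF b _ \<beta>(2) near(1)] \<beta>(1) by simp
  also have "\<dots> \<le> (3/2 * t) powr \<beta>" using near(2) \<beta>(1) by (intro powr_mono2) auto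
  finally have "cmod (1 - approach_map b \<beta> z) < h" using th by simp
  moreover have "approach_map b \<beta> z \<in> ball 0 1"
    using approach_map_props(1)[OF b _ \<beta>(2) near(1)] \<beta>(1) unfolding Gamma_region_def by simp
  ultimately show "z \<in> {z \<in> ball 0 1. approach_map b \<beta> z \<in> S_region 1 h}"
    using near(1) unfolding S_region_def by simp
qed

lemma beta_of_pos:
  assumes "b > 1" shows "beta_of b > 0"
proof -
  have "-1 < 1/b" "1/b < 1" using assms by (auto simp: less_trans[of "-1" 0])
  hence "0 < arccos (1/b)" using arccos_lt_bounded by blast
  thus ?thesis unfolding beta_of_def by simp
qed

lemma scale_of_height:
  fixes h \<alpha> \<beta> :: real
  assumes \<beta>: "0 < \<beta>" and h: "0 < h" "h < 1"
  defines "t \<equiv> 2/3 * (h/2) powr (1/\<beta>)"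
  shows "0 < t" "t < 1" "(3/2 * t) powr \<beta> < h"
    and "t powr \<alpha> * (t/2)^2 = (2/3) powr (2 + \<alpha>) / (4 * 2 powr ((2 + \<alpha>) / \<beta>)) * h powr ((2 + \<alpha>) / \<beta>)"
proof -
  define s where "s = (h/2) powr (1/\<beta>)"
  have s: "0 < s" "s < 1" unfolding s_def using h \<beta> powr_less_mono2[of "1/\<beta>" "h/2" 1] by auto
  show "0 < t" "t < 1" unfolding t_def s_def[symmetric] using s by auto
  have "(3/2 * t) powr \<beta> = h/2" unfolding t_def using h \<beta> by (simp add: powr_powr)
  thus "(3/2 * t) powr \<beta> < h" using h by simp
  have "t powr \<alpha> * (t/2)^2 = t powr (2 + \<alpha>) / 4"
    using \<open>0 < t\<close> by (simp add: powr_add power2_eq_square powr_numeral)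
  also have "t powr (2 + \<alpha>) = (2/3) powr (2 + \<alpha>) * (h/2) powr ((2 + \<alpha>) / \<beta>)"
  proof -
    have "t powr (2 + \<alpha>) = (2/3) powr (2 + \<alpha>) * s powr (2 + \<alpha>)"
      unfolding t_def s_def[symmetric] using powr_mult[of "2/3" s "2 + \<alpha>"] s by simp
    also have "s powr (2 + \<alpha>) = (h/2) powr ((2 + \<alpha>) / \<beta>)"
      unfolding s_def by (simp add: powr_powr)
    finally show ?thesis .
  qed
  also have "(h/2) powr ((2 + \<alpha>) / \<beta>) = h powr ((2 + \<alpha>) / \<beta>) / 2 powr ((2 + \<alpha>) / \<beta>)"
    using h by (simp add: powr_divide)
  finally show "t powr \<alpha> * (t/2)^2
      = (2/3) powr (2 + \<alpha>) / (4 * 2 powr ((2 + \<alpha>) / \<beta>)) * h powr ((2 + \<alpha>) / \<beta>)"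
    by simp
qed

lemma measure_preimage_lower:
  assumes a: "\<alpha> > -1" and b: "b > 1" and \<beta>: "0 < \<beta>" "\<beta> \<le> beta_of b" and h: "0 < h" "h < 1"
  defines "p \<equiv> (2 + \<alpha>) / \<beta>"
  shows "c_alpha \<alpha> * min ((1/2) powr \<alpha>) (3 powr \<alpha>) * pi * ((2/3) powr (2 + \<alpha>) / (4 * 2 powr p))
           * h powr p
         \<le> measure (v_alpha \<alpha>) {z \<in> ball 0 1. approach_map b \<beta> z \<in> S_region 1 h}"
    (is "?C * h powr p \<le> measure _ ?A")
proof -
  obtain t where t: "0 < t" "t < 1" "(3/2 * t) powr \<beta> < h"
      and power: "t powr \<alpha> * (t/2)^2 = (2/3) powr (2 + \<alpha>) / (4 * 2 powr p) * h powr p"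
    using scale_of_height[OF \<beta>(1) h] unfolding p_def by blast
  have "approach_map b \<beta> holomorphic_on ball 0 1"
    using approach_map_holomorphic[OF b _ \<beta>(2)] \<beta>(1) by simp
  hence "open ?A" by (intro open_preimage_S_region holomorphic_on_imp_continuous_on)
  have "?C * h powr p = c_alpha \<alpha> * min ((1/2) powr \<alpha>) (3 powr \<alpha>) * pi * (t powr \<alpha> * (t/2)^2)"
    unfolding power by (simp add: mult_ac)
  also have "\<dots> = c_alpha \<alpha> * min ((1/2) powr \<alpha>) (3 powr \<alpha>) * t powr \<alpha> * (pi * (t/2)^2)"
    by (simp add: mult_ac)
  also have "\<dots> \<le> measure (v_alpha \<alpha>) ?A"
    using small_disc_in_preimage[OF b \<beta> t] \<open>open ?A\<close>
    by (intro measure_v_alpha_ge_small_disc[OF a t(1,2)]) auto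
  finally show ?thesis .
qed

theorem lemma3p9:
  fixes \<alpha> b :: real
  assumes "\<alpha> > -1" and "b > 1"
  shows "\<exists>(\<phi> :: complex \<Rightarrow> complex) C.
           \<phi> holomorphic_on ball 0 1 \<and> \<phi> ` ball 0 1 \<subseteq> ball 0 1 \<and>
           \<phi> ` ball 0 1 \<subseteq> Gamma_region 1 b \<and> C > 0 \<and>
           (\<forall>\<^sub>F h in at_right 0.
              measure (v_alpha \<alpha>) {z \<in> ball 0 1. \<phi> z \<in> S_region 1 h}
                \<ge> C * h powr ((2 + \<alpha>) / beta_of b))"
proof -
  define \<beta> where "\<beta> = beta_of b"
  have \<beta>: "0 < \<beta>" "\<beta> \<le> beta_of b" using beta_of_pos[OF assms(2)] unfolding \<beta>_def by auto
  define \<phi> where "\<phi> = approach_map b \<beta>"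
  have hol: "\<phi> holomorphic_on ball 0 1"
    unfolding \<phi>_def using approach_map_holomorphic[OF assms(2) _ \<beta>(2)] \<beta>(1) by simp
  have Gamma: "\<phi> ` ball 0 1 \<subseteq> Gamma_region 1 b"
    unfolding \<phi>_def using approach_map_props(1)[OF assms(2) _ \<beta>(2)] \<beta>(1) by auto
  hence disc: "\<phi> ` ball 0 1 \<subseteq> ball 0 1" unfolding Gamma_region_def by auto
  define C where "C = c_alpha \<alpha> * min ((1/2) powr \<alpha>) (3 powr \<alpha>) * pi
                        * ((2/3) powr (2 + \<alpha>) / (4 * 2 powr ((2 + \<alpha>) / \<beta>)))"
  have "C > 0" unfolding C_def using c_alpha_pos[OF assms(1)] by simp
  moreover have "\<forall>\<^sub>F h in at_right 0.
      measure (v_alpha \<alpha>) {z \<in> ball 0 1. \<phi> z \<in> S_region 1 h} \<ge> C * h powr ((2 + \<alpha>) / \<beta>)"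
    using eventually_at_right_real[of 0 1]
    by (rule eventually_mono) (use measure_preimage_lower[OF assms \<beta>] in \<open>auto simp: C_def \<phi>_def\<close>)
  ultimately show ?thesis using hol disc Gamma unfolding \<beta>_def by blast
qed

end
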